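(* The lattice $K$ (defined in the context) is infinite, is generated as a lattice by the three elements $a=A_0$, $b=B_0$, $c=C$, and is $2$-modular.
   Context: Let $P=\{c\}\cup\{a_n:n<\omega\}\cup\{b_n:n<\omega\}$ be a set of distinct symbols. For $m,n<\omega$ put $A_m=\{a_k:k\geq m\}$, $B_n=\{b_k:k\geq n\}$, $C=\{c\}$. The lattice $K$ is the set consisting of $\varnothing$, $C$, all $A_m$, all $B_n$ ($m,n<\omega$), and all sets $C\cup A_m\cup B_n$ with $m,n<\omega$ and $|m-n|\leq 1$, ordered by inclusion (meets are intersections; $\varnothing$ is the zero and $C\cup A_0\cup B_0$ is the top). Equivalently, $K$ has join-irreducible elements $c$, $a_n$, $b_n$ ($n<\omega$) with $a_0>a_1>a_2>\cdots$, $b_0>b_1>\cdots$, these chains and $c$ mutually incomparable, and the only nontrivial join-covers among them being $c<a_m\vee b_n$, $a_{m}<b_n\vee c$ and $b_{m}<a_n\vee c$ for $m>n$. For a lattice $L$, define $u\mapsto u^{(1)}$ on $L^3$ by $\langle x,y,z\rangle^{(1)}=\langle x\vee(y\wedge z),\,y\vee(x\wedge z),\,z\vee(x\wedge y)\rangle$, and $u^{(0)}=u$, $u^{(k+1)}=(u^{(k)})^{(1)}$. For a positive integer $h$, $L$ is $h$-modular if $u^{(h+1)}=u^{(h)}$ for all $u\in L^3$. *)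

theory Defs
  imports Main
begin

datatype sym = Sc | Sa nat | Sb nat

definition Aset :: "nat \<Rightarrow> sym set" where "Aset m = {Sa k | k. k \<ge> m}"
definition Bset :: "nat \<Rightarrow> sym set" where "Bset n = {Sb k | k. k \<ge> n}"
definition Cset :: "sym set" where "Cset = {Sc}"

text \<open>The lattice K as a family of subsets of P, ordered by inclusion.\<close>
definition K :: "sym set set" where
  "K = {{}, Cset} \<union> range Aset \<union> range Bset
       \<union> {Cset \<union> Aset m \<union> Bset n | m n. m \<le> n + 1 \<and> n \<le> m + 1}"

definition meetK :: "sym set \<Rightarrow> sym set \<Rightarrow> sym set" where
  "meetK x y = x \<inter> y"

definition joinK :: "sym set \<Rightarrow> sym set \<Rightarrow> sym set" where
  "joinK x y = (THE z. z \<in> K \<and> x \<subseteq> z \<and> y \<subseteq> z \<and> (\<forall>w\<in>K. x \<subseteq> w \<and> y \<subseteq> w \<longrightarrow> z \<subseteq> w))"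

inductive_set genK :: "sym set set \<Rightarrow> sym set set" for G where
  base: "x \<in> G \<Longrightarrow> x \<in> genK G"
| meet: "x \<in> genK G \<Longrightarrow> y \<in> genK G \<Longrightarrow> meetK x y \<in> genK G"
| join: "x \<in> genK G \<Longrightarrow> y \<in> genK G \<Longrightarrow> joinK x y \<in> genK G"

definition step :: "sym set \<times> sym set \<times> sym set \<Rightarrow> sym set \<times> sym set \<times> sym set" where
  "step u = (case u of (x, y, z) \<Rightarrow>
     (joinK x (meetK y z), joinK y (meetK x z), joinK z (meetK x y)))"

definition iter :: "nat \<Rightarrow> sym set \<times> sym set \<times> sym set \<Rightarrow> sym set \<times> sym set \<times> sym set" where
  "iter k u = (step ^^ k) u"

definition h_modular_K :: "nat \<Rightarrow> bool" where
  "h_modular_K h \<longleftrightarrow> (\<forall>x\<in>K. \<forall>y\<in>K. \<forall>z\<in>K. iter (h + 1) (x, y, z) = iter h (x, y, z))"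

end

theory Submission
  imports Defs
begin

(* The sets in K are exactly the subsets of P closed under the Horn rules read off from the order
   and the join-covers of the join-irreducibles, so K is closed under arbitrary intersections and
   is a lattice whose meet is intersection.

   For 2-modularity, a triple with two comparable entries stabilises after two steps in every
   lattice, by direct computation. A pairwise incomparable triple in K either has pairwise
   disjoint entries, and is then fixed, or its first iterate lies in the filter of elements above
   c. On that filter joins are unions, so it is distributive and the iteration stops one step
   later.

   Generation: a_(m+1) = a_0 \<and> (b_m \<or> c), b_(m+1) = b_0 \<and> (a_m \<or> c), 0 = a_0 \<and> b_0, and
   C \<union> A_m \<union> B_n = a_m \<or> b_n whenever |m - n| \<le> 1. *)

unbundle lattice_syntax

definition step_lat :: "'a::lattice \<times> 'a \<times> 'a \<Rightarrow> 'a \<times> 'a \<times> 'a" where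
  "step_lat u = (case u of (x, y, z) \<Rightarrow> (x \<squnion> (y \<sqinter> z), y \<squnion> (x \<sqinter> z), z \<squnion> (x \<sqinter> y)))"

lemma step_lat_of_le:
  assumes "x \<le> y"
  shows "step_lat (x, y, z) = (x \<squnion> (y \<sqinter> z), y, z \<squnion> x)"
  using assms by (simp add: step_lat_def le_infI1 sup.absorb1 inf.absorb1)

lemma step_lat_iter_of_le:
  fixes x y z :: "'a::lattice"
  assumes "x \<le> y"
  shows "(step_lat ^^ 3) (x, y, z) = (step_lat ^^ 2) (x, y, z)"
proof -
  let ?x1 = "x \<squnion> (y \<sqinter> z)" and ?x2 = "x \<squnion> (y \<sqinter> (z \<squnion> x))"
  have "?x1 \<le> y" "?x2 \<le> y" using assms by simp_all
  have "step_lat (step_lat (x, y, z)) = step_lat (?x1, y, z \<squnion> x)"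
    using assms by (simp add: step_lat_of_le)
  also have "step_lat (?x1, y, z \<squnion> x) = (?x2, y, z \<squnion> x)"
  proof -
    have "?x1 \<squnion> (y \<sqinter> (z \<squnion> x)) = ?x2"
      using inf_mono[OF order_refl sup_ge1, of y z x] by (simp add: sup_assoc sup.absorb2)
    moreover have "z \<squnion> x \<squnion> ?x1 = z \<squnion> x"
      by (simp add: sup.absorb1 le_infI2)
    ultimately show ?thesis
      using \<open>?x1 \<le> y\<close> by (simp add: step_lat_of_le)
  qed
  finally have 2: "step_lat (step_lat (x, y, z)) = (?x2, y, z \<squnion> x)" .
  have "step_lat (?x2, y, z \<squnion> x) = (?x2, y, z \<squnion> x)"
    using \<open>?x2 \<le> y\<close> by (simp add: step_lat_of_le sup.absorb1 sup.absorb2 le_infI2)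
  with 2 show ?thesis by (simp add: numeral_3_eq_3 numeral_2_eq_2)
qed

definition swap12 :: "'a \<times> 'a \<times> 'a \<Rightarrow> 'a \<times> 'a \<times> 'a" where
  "swap12 u = (case u of (x, y, z) \<Rightarrow> (y, x, z))"

definition swap23 :: "'a \<times> 'a \<times> 'a \<Rightarrow> 'a \<times> 'a \<times> 'a" where
  "swap23 u = (case u of (x, y, z) \<Rightarrow> (x, z, y))"

lemma swap12_swap12 [simp]: "swap12 (swap12 u) = u"
  by (cases u) (simp add: swap12_def)

lemma swap23_swap23 [simp]: "swap23 (swap23 u) = u"
  by (cases u) (simp add: swap23_def)

lemma funpow_step_lat_swap12: "(step_lat ^^ n) (swap12 u) = swap12 ((step_lat ^^ n) u)"
proof (induction n arbitrary: u)
  case (Suc n)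
  have "step_lat (swap12 v) = swap12 (step_lat v)" for v :: "'a \<times> 'a \<times> 'a"
    by (cases v) (simp add: step_lat_def swap12_def inf_commute)
  with Suc show ?case by (simp add: funpow_swap1)
qed simp

lemma funpow_step_lat_swap23: "(step_lat ^^ n) (swap23 u) = swap23 ((step_lat ^^ n) u)"
proof (induction n arbitrary: u)
  case (Suc n)
  have "step_lat (swap23 v) = swap23 (step_lat v)" for v :: "'a \<times> 'a \<times> 'a"
    by (cases v) (simp add: step_lat_def swap23_def inf_commute)
  with Suc show ?case by (simp add: funpow_swap1)
qed simp

lemma step_lat_iter_of_comparable:
  fixes x y z :: "'a::lattice"
  assumes "x \<le> y \<or> y \<le> x \<or> x \<le> z \<or> z \<le> x \<or> y \<le> z \<or> z \<le> y"
  shows "(step_lat ^^ 3) (x, y, z) = (step_lat ^^ 2) (x, y, z)"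
proof -
  let ?P = "\<lambda>u. (step_lat ^^ 3) u = (step_lat ^^ 2) u"
  have swap12: "?P u" if "?P (swap12 u)" for u
    using arg_cong[where f = swap12, OF that] by (simp add: funpow_step_lat_swap12)
  have swap23: "?P u" if "?P (swap23 u)" for u
    using arg_cong[where f = swap23, OF that] by (simp add: funpow_step_lat_swap23)
  from assms consider "x \<le> y" | "y \<le> x" | "x \<le> z" | "z \<le> x" | "y \<le> z" | "z \<le> y"
    by blast
  then show ?thesis
  proof cases
    case 1
    then show ?thesis by (rule step_lat_iter_of_le)
  next
    case 2
    show ?thesis by (rule swap12) (simp add: swap12_def step_lat_iter_of_le 2)
  next
    case 3
    show ?thesis by (rule swap23) (simp add: swap23_def step_lat_iter_of_le 3)
  next
    case 4
    show ?thesis by (rule swap23, rule swap12) (simp add: swap12_def swap23_def step_lat_iter_of_le 4)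
  next
    case 5
    show ?thesis by (rule swap12, rule swap23) (simp add: swap12_def swap23_def step_lat_iter_of_le 5)
  next
    case 6
    show ?thesis by (rule swap23, rule swap12, rule swap23) (simp add: swap12_def swap23_def step_lat_iter_of_le 6)
  qed
qed

lemma Aset_subset_iff: "Aset i \<subseteq> Aset j \<longleftrightarrow> j \<le> i"
  by (auto simp: Aset_def)

lemma Bset_subset_iff: "Bset i \<subseteq> Bset j \<longleftrightarrow> j \<le> i"
  by (auto simp: Bset_def)

lemma generators_disjoint [simp]:
  "Aset i \<inter> Bset j = {}" "Bset j \<inter> Aset i = {}" "Cset \<inter> Aset i = {}" "Aset i \<inter> Cset = {}"
  "Cset \<inter> Bset j = {}" "Bset j \<inter> Cset = {}"
  by (auto simp: Aset_def Bset_def Cset_def)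

lemma Aset_neq_Bset [simp]: "Aset i \<noteq> Bset j" "Bset j \<noteq> Aset i"
  by (auto simp: Aset_def Bset_def)

lemma top_in_K: "m \<le> n + 1 \<Longrightarrow> n \<le> m + 1 \<Longrightarrow> Cset \<union> Aset m \<union> Bset n \<in> K"
  unfolding K_def by blast

(* The clauses say a_(k+1) \<le> a_k, b_(k+1) \<le> b_k and that c \<le> a_k \<or> b_l, b_(k+1) \<le> a_k \<or> c,
   a_(k+1) \<le> b_k \<or> c are join-covers: an element of K is the set of join-irreducibles below it. *)
definition K_closed :: "sym set \<Rightarrow> bool" where
  "K_closed S \<longleftrightarrow>
     (\<forall>k. Sa k \<in> S \<longrightarrow> Sa (Suc k) \<in> S) \<and> (\<forall>k. Sb k \<in> S \<longrightarrow> Sb (Suc k) \<in> S) \<and>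
     (\<forall>k l. Sa k \<in> S \<longrightarrow> Sb l \<in> S \<longrightarrow> Sc \<in> S) \<and>
     (\<forall>k. Sc \<in> S \<longrightarrow> Sa k \<in> S \<longrightarrow> Sb (Suc k) \<in> S) \<and>
     (\<forall>k. Sc \<in> S \<longrightarrow> Sb k \<in> S \<longrightarrow> Sa (Suc k) \<in> S)"

lemma K_closed_Sa_up:
  assumes "K_closed S" "Sa k \<in> S" "k \<le> l"
  shows "Sa l \<in> S"
  using assms(3,2) by (induction rule: dec_induct) (use assms(1) in \<open>auto simp: K_closed_def\<close>)

lemma K_closed_Sb_up:
  assumes "K_closed S" "Sb k \<in> S" "k \<le> l"
  shows "Sb l \<in> S"
  using assms(3,2) by (induction rule: dec_induct) (use assms(1) in \<open>auto simp: K_closed_def\<close>)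

lemma K_closed_Aset_subset: "K_closed S \<Longrightarrow> Sa k \<in> S \<Longrightarrow> Aset k \<subseteq> S"
  by (auto simp: Aset_def intro: K_closed_Sa_up)

lemma K_closed_Bset_subset: "K_closed S \<Longrightarrow> Sb k \<in> S \<Longrightarrow> Bset k \<subseteq> S"
  by (auto simp: Bset_def intro: K_closed_Sb_up)

lemma K_closed_Sa_part:
  assumes "K_closed S" "Sa k \<in> S"
  shows "{Sa j | j. Sa j \<in> S} = Aset (LEAST j. Sa j \<in> S)"
  using assms LeastI[of "\<lambda>j. Sa j \<in> S"] Least_le[of "\<lambda>j. Sa j \<in> S"]
  by (auto simp: Aset_def intro: K_closed_Sa_up)

lemma K_closed_Sb_part:
  assumes "K_closed S" "Sb k \<in> S"
  shows "{Sb j | j. Sb j \<in> S} = Bset (LEAST j. Sb j \<in> S)"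
  using assms LeastI[of "\<lambda>j. Sb j \<in> S"] Least_le[of "\<lambda>j. Sb j \<in> S"]
  by (auto simp: Bset_def intro: K_closed_Sb_up)

lemma K_closed_in_K:
  assumes "K_closed S"
  shows "S \<in> K"
proof -
  let ?a = "{Sa j | j. Sa j \<in> S}" and ?b = "{Sb j | j. Sb j \<in> S}"
  let ?m = "LEAST j. Sa j \<in> S" and ?n = "LEAST j. Sb j \<in> S"
  have S: "S = (S \<inter> Cset) \<union> ?a \<union> ?b"
    by (auto simp: Cset_def) (metis sym.exhaust)
  consider "?a = {}" "?b = {}" | k where "Sa k \<in> S" "?b = {}" | l where "Sb l \<in> S" "?a = {}"
    | k l where "Sa k \<in> S" "Sb l \<in> S"
    by blast
  then show ?thesis
  proof cases
    case 1
    then have "S = {} \<or> S = Cset" using S by (auto simp: Cset_def)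
    then show ?thesis by (auto simp: K_def)
  next
    case (2 k)
    then have "Sc \<notin> S" using assms by (auto simp: K_closed_def)
    then have "S = Aset ?m" using S 2 K_closed_Sa_part[OF assms] by (auto simp: Cset_def)
    then show ?thesis by (auto simp: K_def)
  next
    case (3 l)
    then have "Sc \<notin> S" using assms by (auto simp: K_closed_def)
    then have "S = Bset ?n" using S 3 K_closed_Sb_part[OF assms] by (auto simp: Cset_def)
    then show ?thesis by (auto simp: K_def)
  next
    case (4 k l)
    have "Sc \<in> S" using 4 assms by (auto simp: K_closed_def)
    then have "Sb (Suc ?m) \<in> S" "Sa (Suc ?n) \<in> S"
      using 4 assms LeastI[of "\<lambda>j. Sa j \<in> S"] LeastI[of "\<lambda>j. Sb j \<in> S"] by (auto simp: K_closed_def)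
    then have "?n \<le> ?m + 1" "?m \<le> ?n + 1" by (auto intro: Least_le)
    moreover have "S = Cset \<union> Aset ?m \<union> Bset ?n"
      using S 4 \<open>Sc \<in> S\<close> K_closed_Sa_part[OF assms] K_closed_Sb_part[OF assms] by (auto simp: Cset_def)
    ultimately show ?thesis by (auto simp: K_def)
  qed
qed

lemma K_eq_closed: "K = {S. K_closed S}"
proof
  have "K_closed (Cset \<union> Aset m \<union> Bset n)" if "m \<le> n + 1" "n \<le> m + 1" for m n
    using that by (auto simp: K_closed_def Aset_def Bset_def Cset_def)
  moreover have "K_closed {}" "K_closed Cset" "K_closed (Aset m)" "K_closed (Bset m)" for m
    by (auto simp: K_closed_def Aset_def Bset_def Cset_def)
  ultimately show "K \<subseteq> {S. K_closed S}"
    unfolding K_def by blast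
  show "{S. K_closed S} \<subseteq> K"
    using K_closed_in_K by blast
qed

lemma K_closed_Inter:
  assumes "\<And>S. S \<in> F \<Longrightarrow> K_closed S"
  shows "K_closed (\<Inter>F)"
  unfolding K_closed_def Inter_iff by (intro conjI allI impI ballI) (meson assms K_closed_def)+

lemma Inter_in_K: "F \<subseteq> K \<Longrightarrow> \<Inter>F \<in> K"
  using K_closed_Inter unfolding K_eq_closed by blast

lemma joinK_eq_Inter: "joinK x y = \<Inter>{w \<in> K. x \<union> y \<subseteq> w}"
  unfolding joinK_def
proof (rule the_equality)
  let ?j = "\<Inter>{w \<in> K. x \<union> y \<subseteq> w}"
  have "?j \<in> K" by (rule Inter_in_K) blast
  moreover have "x \<subseteq> ?j" "y \<subseteq> ?j" by (auto intro: Inter_greatest)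
  moreover have "?j \<subseteq> w" if "w \<in> K" "x \<subseteq> w" "y \<subseteq> w" for w
    using that by (intro Inter_lower) auto
  ultimately show "?j \<in> K \<and> x \<subseteq> ?j \<and> y \<subseteq> ?j \<and> (\<forall>w\<in>K. x \<subseteq> w \<and> y \<subseteq> w \<longrightarrow> ?j \<subseteq> w)"
    by blast
  show "z = ?j" if "z \<in> K \<and> x \<subseteq> z \<and> y \<subseteq> z \<and> (\<forall>w\<in>K. x \<subseteq> w \<and> y \<subseteq> w \<longrightarrow> z \<subseteq> w)" for z
  proof
    show "z \<subseteq> ?j" using that by (intro Inter_greatest) auto
    show "?j \<subseteq> z" using that by (intro Inter_lower) auto
  qed
qed

lemma joinK_in_K: "joinK x y \<in> K"
  unfolding joinK_eq_Inter by (rule Inter_in_K) blast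

lemma joinK_upper: "x \<union> y \<subseteq> joinK x y"
  unfolding joinK_eq_Inter by (auto intro: Inter_greatest)

lemma joinK_least: "w \<in> K \<Longrightarrow> x \<union> y \<subseteq> w \<Longrightarrow> joinK x y \<subseteq> w"
  unfolding joinK_eq_Inter by (intro Inter_lower) auto

lemma joinK_eqI:
  assumes "z \<in> K" "x \<union> y \<subseteq> z" "\<And>w. w \<in> K \<Longrightarrow> x \<union> y \<subseteq> w \<Longrightarrow> z \<subseteq> w"
  shows "joinK x y = z"
  using assms joinK_least[of z x y] joinK_in_K[of x y] joinK_upper[of x y] by (intro subset_antisym) auto

typedef kel = K
  by (auto simp: K_def)

setup_lifting type_definition_kel

instantiation kel :: lattice
begin

lift_definition less_eq_kel :: "kel \<Rightarrow> kel \<Rightarrow> bool" is "(\<subseteq>)" .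
lift_definition less_kel :: "kel \<Rightarrow> kel \<Rightarrow> bool" is "(\<subset>)" .
lift_definition inf_kel :: "kel \<Rightarrow> kel \<Rightarrow> kel" is meetK
  unfolding meetK_def using Inter_in_K[of "{_, _}"] by simp
lift_definition sup_kel :: "kel \<Rightarrow> kel \<Rightarrow> kel" is joinK
  by (rule joinK_in_K)

instance
proof
  fix x y z :: kel
  show "x < y \<longleftrightarrow> x \<le> y \<and> \<not> y \<le> x" by transfer blast
  show "x \<le> x" by transfer simp
  show "x \<le> y \<Longrightarrow> y \<le> z \<Longrightarrow> x \<le> z" by transfer simp
  show "x \<le> y \<Longrightarrow> y \<le> x \<Longrightarrow> x = y" by transfer simp
  show "x \<sqinter> y \<le> x" "x \<sqinter> y \<le> y" by (transfer; simp add: meetK_def)+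
  show "x \<le> y \<Longrightarrow> x \<le> z \<Longrightarrow> x \<le> y \<sqinter> z" by transfer (simp add: meetK_def)
  show "x \<le> x \<squnion> y" "y \<le> x \<squnion> y" by (transfer; use joinK_upper in blast)+
  show "y \<le> x \<Longrightarrow> z \<le> x \<Longrightarrow> y \<squnion> z \<le> x" by transfer (simp add: joinK_least)
qed

end

lemma Rep_kel_inf: "Rep_kel (x \<sqinter> y) = Rep_kel x \<inter> Rep_kel y"
  by transfer (simp add: meetK_def)

lemma Rep_kel_sup: "Rep_kel (x \<squnion> y) = joinK (Rep_kel x) (Rep_kel y)"
  by transfer simp

lemma less_eq_kel_iff: "x \<le> y \<longleftrightarrow> Rep_kel x \<subseteq> Rep_kel y"
  by transfer simp

definition Rep3 :: "kel \<times> kel \<times> kel \<Rightarrow> sym set \<times> sym set \<times> sym set" where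
  "Rep3 = map_prod Rep_kel (map_prod Rep_kel Rep_kel)"

lemma step_Rep3: "step (Rep3 u) = Rep3 (step_lat u)"
  by (cases u) (simp add: step_def step_lat_def Rep3_def Rep_kel_sup Rep_kel_inf meetK_def)

lemma iter_Rep3: "iter k (Rep3 u) = Rep3 ((step_lat ^^ k) u)"
  by (induction k) (simp_all add: iter_def step_Rep3)

lemma h_modular_K_of_kel:
  assumes "\<And>u :: kel \<times> kel \<times> kel. (step_lat ^^ (h + 1)) u = (step_lat ^^ h) u"
  shows "h_modular_K h"
  unfolding h_modular_K_def
proof (intro ballI)
  fix x y z assume "x \<in> K" "y \<in> K" "z \<in> K"
  then have "(x, y, z) = Rep3 (Abs_kel x, Abs_kel y, Abs_kel z)"
    by (simp add: Rep3_def Abs_kel_inverse)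
  then show "iter (h + 1) (x, y, z) = iter h (x, y, z)"
    by (simp only: iter_Rep3 assms)
qed

definition above_c :: "kel \<Rightarrow> bool" where
  "above_c x \<longleftrightarrow> Sc \<in> Rep_kel x"

lemma above_c_inf [simp]: "above_c (x \<sqinter> y) \<longleftrightarrow> above_c x \<and> above_c y"
  by (simp add: above_c_def Rep_kel_inf)

lemma above_c_sup1: "above_c x \<Longrightarrow> above_c (x \<squnion> y)"
  and above_c_sup2: "above_c y \<Longrightarrow> above_c (x \<squnion> y)"
  using joinK_upper by (auto simp: above_c_def Rep_kel_sup)

lemma above_c_sup_of_Sa_Sb:
  assumes "Sa k \<in> Rep_kel x \<union> Rep_kel y" "Sb l \<in> Rep_kel x \<union> Rep_kel y"
  shows "above_c (x \<squnion> y)"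
proof -
  have "K_closed (Rep_kel (x \<squnion> y))"
    using Rep_kel K_eq_closed by blast
  with assms joinK_upper show ?thesis
    unfolding above_c_def Rep_kel_sup K_closed_def by blast
qed

lemma Rep_kel_sup_of_above_c:
  assumes "above_c x" "above_c y"
  shows "Rep_kel (x \<squnion> y) = Rep_kel x \<union> Rep_kel y"
proof -
  have "K_closed (Rep_kel x)" "K_closed (Rep_kel y)"
    using Rep_kel K_eq_closed by blast+
  with assms have "K_closed (Rep_kel x \<union> Rep_kel y)"
    unfolding K_closed_def above_c_def by blast
  then show ?thesis
    unfolding Rep_kel_sup by (intro joinK_eqI) (auto simp: K_eq_closed)
qed

lemma step_lat_idem_of_above_c:
  assumes "above_c x" "above_c y" "above_c z"
  shows "step_lat (step_lat (x, y, z)) = step_lat (x, y, z)"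
proof -
  have Rep: "Rep_kel (a \<squnion> b \<sqinter> c) = Rep_kel a \<union> (Rep_kel b \<inter> Rep_kel c)"
    if "above_c a" "above_c b" "above_c c" for a b c
    using that by (simp add: Rep_kel_sup_of_above_c Rep_kel_inf)
  have "above_c (x \<squnion> y \<sqinter> z)" "above_c (y \<squnion> x \<sqinter> z)" "above_c (z \<squnion> x \<sqinter> y)"
    using assms by (simp_all add: above_c_sup1)
  with assms show ?thesis
    by (simp add: step_lat_def Rep_kel_inject[symmetric] Rep) blast
qed

lemma not_above_c_cases:
  assumes "\<not> above_c x"
  shows "Rep_kel x = {} \<or> (\<exists>i. Rep_kel x = Aset i) \<or> (\<exists>j. Rep_kel x = Bset j)"
  using Rep_kel[of x] assms by (auto simp: K_def above_c_def Cset_def)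

lemma incomparable_not_above_c:
  assumes "\<not> above_c x" "\<not> above_c y" "\<not> x \<le> y" "\<not> y \<le> x"
  shows "\<exists>i j. Rep_kel x = Aset i \<and> Rep_kel y = Bset j \<or> Rep_kel x = Bset j \<and> Rep_kel y = Aset i"
  using not_above_c_cases[OF assms(1)] not_above_c_cases[OF assms(2)] assms(3,4)
  unfolding less_eq_kel_iff
  by (elim disjE exE) (simp_all add: Aset_subset_iff Bset_subset_iff, blast+)

lemma above_c_cofinite:
  assumes "above_c x" "Rep_kel x \<noteq> Cset"
  obtains n where "Aset n \<union> Bset n \<subseteq> Rep_kel x"
proof -
  obtain m n where "Rep_kel x = Cset \<union> Aset m \<union> Bset n"
    using Rep_kel[of x] assms by (auto simp: K_def above_c_def Aset_def Bset_def Cset_def)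
  then have "Aset (max m n) \<union> Bset (max m n) \<subseteq> Rep_kel x"
    by (auto simp: Aset_def Bset_def)
  then show ?thesis by (rule that)
qed

lemma above_c_sup_inf_of_mixed:
  assumes "above_c p" "Rep_kel p \<noteq> Cset"
    and "Rep_kel q = Aset i \<and> Rep_kel r = Bset j \<or> Rep_kel q = Bset j \<and> Rep_kel r = Aset i"
  shows "above_c (q \<squnion> p \<sqinter> r) \<and> above_c (q \<squnion> r \<sqinter> p)"
proof -
  obtain n where n: "Aset n \<union> Bset n \<subseteq> Rep_kel p"
    using assms(1,2) by (rule above_c_cofinite)
  have "Sa (max i n) \<in> Rep_kel q \<union> Rep_kel (p \<sqinter> r)" "Sb (max j n) \<in> Rep_kel q \<union> Rep_kel (p \<sqinter> r)"
    using assms(3) n by (auto simp: Rep_kel_inf Aset_def Bset_def)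
  then show ?thesis
    using above_c_sup_of_Sa_Sb by (metis inf_commute)
qed

lemma step_lat_eq_of_disjoint:
  assumes "Rep_kel x \<inter> Rep_kel y = {}" "Rep_kel x \<inter> Rep_kel z = {}" "Rep_kel y \<inter> Rep_kel z = {}"
  shows "step_lat (x, y, z) = (x, y, z)"
  using assms by (simp add: step_lat_def sup.absorb1 less_eq_kel_iff Rep_kel_inf)

lemma one_above_c_dichotomy:
  assumes "above_c p"
    and "Rep_kel q = Aset i \<and> Rep_kel r = Bset j \<or> Rep_kel q = Bset j \<and> Rep_kel r = Aset i"
  shows "Rep_kel p \<inter> Rep_kel q = {} \<and> Rep_kel p \<inter> Rep_kel r = {} \<and> Rep_kel q \<inter> Rep_kel r = {} \<or>
    above_c (q \<squnion> p \<sqinter> r) \<and> above_c (q \<squnion> r \<sqinter> p) \<and>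
    above_c (r \<squnion> p \<sqinter> q) \<and> above_c (r \<squnion> q \<sqinter> p)"
proof (cases "Rep_kel p = Cset")
  case True
  from assms(2) True show ?thesis by (elim disjE) simp_all
next
  case False
  have "Rep_kel r = Aset i \<and> Rep_kel q = Bset j \<or> Rep_kel r = Bset j \<and> Rep_kel q = Aset i"
    using assms(2) by blast
  then show ?thesis
    using above_c_sup_inf_of_mixed[OF assms(1) False assms(2)]
      above_c_sup_inf_of_mixed[OF assms(1) False]
    by blast
qed

lemma step_lat_incomparable:
  fixes x y z :: kel
  assumes "\<not> x \<le> y" "\<not> y \<le> x" "\<not> x \<le> z" "\<not> z \<le> x" "\<not> y \<le> z" "\<not> z \<le> y"
  shows "step_lat (x, y, z) = (x, y, z) \<or>
    above_c (x \<squnion> y \<sqinter> z) \<and> above_c (y \<squnion> x \<sqinter> z) \<and> above_c (z \<squnion> x \<sqinter> y)"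
proof -
  consider "above_c x \<and> above_c y \<or> above_c x \<and> above_c z \<or> above_c y \<and> above_c z"
    | "above_c x" "\<not> above_c y" "\<not> above_c z" | "above_c y" "\<not> above_c x" "\<not> above_c z"
    | "above_c z" "\<not> above_c x" "\<not> above_c y" | "\<not> above_c x" "\<not> above_c y" "\<not> above_c z"
    by blast
  then show ?thesis
  proof cases
    case 1
    then show ?thesis by (auto intro: above_c_sup1 above_c_sup2)
  next
    case 2
    with assms obtain i j
      where "Rep_kel y = Aset i \<and> Rep_kel z = Bset j
        \<or> Rep_kel y = Bset j \<and> Rep_kel z = Aset i"
      using incomparable_not_above_c by blast
    from one_above_c_dichotomy[OF \<open>above_c x\<close> this] show ?thesis
      using \<open>above_c x\<close> by (auto simp: Int_commute intro: step_lat_eq_of_disjoint above_c_sup1)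
  next
    case 3
    with assms obtain i j
      where "Rep_kel x = Aset i \<and> Rep_kel z = Bset j
        \<or> Rep_kel x = Bset j \<and> Rep_kel z = Aset i"
      using incomparable_not_above_c by blast
    from one_above_c_dichotomy[OF \<open>above_c y\<close> this] show ?thesis
      using \<open>above_c y\<close> by (auto simp: Int_commute intro: step_lat_eq_of_disjoint above_c_sup1)
  next
    case 4
    with assms obtain i j
      where "Rep_kel x = Aset i \<and> Rep_kel y = Bset j
        \<or> Rep_kel x = Bset j \<and> Rep_kel y = Aset i"
      using incomparable_not_above_c by blast
    from one_above_c_dichotomy[OF \<open>above_c z\<close> this] show ?thesis
      using \<open>above_c z\<close> by (auto simp: Int_commute intro: step_lat_eq_of_disjoint above_c_sup1)
  next
    case 5
    then have False
      using incomparable_not_above_c[of x y] incomparable_not_above_c[of x z]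
        incomparable_not_above_c[of y z] assms
      by auto
    then show ?thesis ..
  qed
qed

lemma step_lat_iter_kel: "(step_lat ^^ 3) u = (step_lat ^^ 2) (u :: kel \<times> kel \<times> kel)"
proof -
  obtain x y z where u: "u = (x, y, z)" by (cases u)
  show ?thesis
  proof (cases "x \<le> y \<or> y \<le> x \<or> x \<le> z \<or> z \<le> x \<or> y \<le> z \<or> z \<le> y")
    case True
    then show ?thesis unfolding u by (rule step_lat_iter_of_comparable)
  next
    case False
    then have "step_lat u = u \<or>
      above_c (x \<squnion> y \<sqinter> z) \<and> above_c (y \<squnion> x \<sqinter> z) \<and> above_c (z \<squnion> x \<sqinter> y)"
      using step_lat_incomparable[of x y z] unfolding u by blast
    then show ?thesis
    proof
      assume "step_lat u = u"
      then show ?thesis by (simp add: numeral_3_eq_3 numeral_2_eq_2)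
    next
      assume "above_c (x \<squnion> y \<sqinter> z) \<and> above_c (y \<squnion> x \<sqinter> z) \<and> above_c (z \<squnion> x \<sqinter> y)"
      moreover have "step_lat u = (x \<squnion> y \<sqinter> z, y \<squnion> x \<sqinter> z, z \<squnion> x \<sqinter> y)"
        by (simp add: u step_lat_def)
      ultimately show ?thesis
        by (simp add: numeral_3_eq_3 numeral_2_eq_2 step_lat_idem_of_above_c)
    qed
  qed
qed

lemma joinK_Bset_Cset: "joinK (Bset m) Cset = Cset \<union> Aset (Suc m) \<union> Bset m"
proof (rule joinK_eqI)
  show "Cset \<union> Aset (Suc m) \<union> Bset m \<in> K" by (rule top_in_K) simp_all
  show "Bset m \<union> Cset \<subseteq> Cset \<union> Aset (Suc m) \<union> Bset m" by blast
  fix w assume "w \<in> K" "Bset m \<union> Cset \<subseteq> w"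
  then have "K_closed w" "Sc \<in> w" "Sb m \<in> w" by (auto simp: K_eq_closed Cset_def Bset_def)
  then show "Cset \<union> Aset (Suc m) \<union> Bset m \<subseteq> w"
    using \<open>Bset m \<union> Cset \<subseteq> w\<close> K_closed_Aset_subset by (auto simp: K_closed_def)
qed

lemma joinK_Aset_Cset: "joinK (Aset m) Cset = Cset \<union> Aset m \<union> Bset (Suc m)"
proof (rule joinK_eqI)
  show "Cset \<union> Aset m \<union> Bset (Suc m) \<in> K" by (rule top_in_K) simp_all
  show "Aset m \<union> Cset \<subseteq> Cset \<union> Aset m \<union> Bset (Suc m)" by blast
  fix w assume "w \<in> K" "Aset m \<union> Cset \<subseteq> w"
  then have "K_closed w" "Sc \<in> w" "Sa m \<in> w" by (auto simp: K_eq_closed Cset_def Aset_def)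
  then show "Cset \<union> Aset m \<union> Bset (Suc m) \<subseteq> w"
    using \<open>Aset m \<union> Cset \<subseteq> w\<close> K_closed_Bset_subset by (auto simp: K_closed_def)
qed

lemma joinK_Aset_Bset:
  assumes "m \<le> n + 1" "n \<le> m + 1"
  shows "joinK (Aset m) (Bset n) = Cset \<union> Aset m \<union> Bset n"
proof (rule joinK_eqI)
  show "Cset \<union> Aset m \<union> Bset n \<in> K" using assms by (rule top_in_K)
  show "Aset m \<union> Bset n \<subseteq> Cset \<union> Aset m \<union> Bset n" by blast
  fix w assume "w \<in> K" "Aset m \<union> Bset n \<subseteq> w"
  then have "K_closed w" "Sa m \<in> w" "Sb n \<in> w" by (auto simp: K_eq_closed Aset_def Bset_def)
  then show "Cset \<union> Aset m \<union> Bset n \<subseteq> w"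
    using \<open>Aset m \<union> Bset n \<subseteq> w\<close> by (auto simp: K_closed_def Cset_def)
qed

lemma Aset_Bset_in_genK: "Aset m \<in> genK {Aset 0, Bset 0, Cset} \<and> Bset m \<in> genK {Aset 0, Bset 0, Cset}"
proof (induction m)
  case 0
  then show ?case by (simp add: genK.base)
next
  case (Suc m)
  have "Aset (Suc m) = meetK (Aset 0) (joinK (Bset m) Cset)"
    "Bset (Suc m) = meetK (Bset 0) (joinK (Aset m) Cset)"
    by (simp_all add: joinK_Bset_Cset joinK_Aset_Cset meetK_def) (auto simp: Aset_def Bset_def Cset_def)
  with Suc show ?case
    by (metis genK.base genK.join genK.meet insertCI)
qed

lemma genK_eq_K: "genK {Aset 0, Bset 0, Cset} = K"
proof
  show "genK {Aset 0, Bset 0, Cset} \<subseteq> K"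
  proof
    fix x assume "x \<in> genK {Aset 0, Bset 0, Cset}"
    then show "x \<in> K"
    proof (induction rule: genK.induct)
      case (base x)
      then show ?case by (auto simp: K_def)
    next
      case (meet x y)
      then show ?case using Inter_in_K[of "{x, y}"] by (simp add: meetK_def)
    next
      case (join x y)
      show ?case by (rule joinK_in_K)
    qed
  qed
  show "K \<subseteq> genK {Aset 0, Bset 0, Cset}"
  proof
    let ?G = "genK {Aset 0, Bset 0, Cset}"
    fix x assume "x \<in> K"
    then consider "x = {}" | "x = Cset" | m where "x = Aset m" | n where "x = Bset n"
      | m n where "x = Cset \<union> Aset m \<union> Bset n" "m \<le> n + 1" "n \<le> m + 1"
      unfolding K_def by blast
    then show "x \<in> ?G"
    proof cases
      case 1
      then have "x = meetK (Aset 0) (Bset 0)" by (simp add: meetK_def)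
      then show ?thesis by (simp add: genK.base genK.meet)
    next
      case 2
      then show ?thesis by (simp add: genK.base)
    next
      case 3
      then show ?thesis using Aset_Bset_in_genK by simp
    next
      case 4
      then show ?thesis using Aset_Bset_in_genK by simp
    next
      case (5 m n)
      then have "x = joinK (Aset m) (Bset n)" by (simp add: joinK_Aset_Bset)
      then show ?thesis using Aset_Bset_in_genK by (simp add: genK.join)
    qed
  qed
qed

lemma infinite_K: "infinite K"
proof
  assume "finite K"
  moreover have "inj Aset"
    by (rule injI) (metis Aset_subset_iff order_antisym order_refl)
  moreover have "range Aset \<subseteq> K"
    by (auto simp: K_def)
  ultimately show False
    using inj_on_finite[of Aset UNIV K] by simp
qed

theorem theorem4p5:
  shows "infinite K \<and> genK {Aset 0, Bset 0, Cset} = K \<and> h_modular_K 2"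
  using infinite_K genK_eq_K h_modular_K_of_kel[of 2] step_lat_iter_kel by simp

end
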